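(* A pointed $(n+d,d)$-matching field is linkage if and only if its reduction is an $(n,d)$-matching left-semi-ensemble. Consequently, reduction is a bijection between linkage pointed $(n+d,d)$-matching fields and $(n,d)$-matching left-semi-ensembles.
   Context: Let $n,d$ be positive integers, $[\bar d]=\{\bar1,\dots,\bar d\}$, and $[\underline d]=\{\underline1,\dots,\underline d\}$ a further copy of $[d]$. A pointed $(n+d,d)$-matching field assigns to every $d$-element subset $\sigma\subseteq[n]\sqcup[\underline d]$ a bijection $M_\sigma:\sigma\to[\bar d]$ such that $M_\sigma(\underline j)=\bar j$ whenever $\underline j\in\sigma$; each $M_\sigma$ is viewed as a perfect matching graph between $\sigma$ and $[\bar d]$. It is linkage if for every $(d+1)$-element subset $\tau\subseteq[n]\sqcup[\underline d]$, the union of the graphs $M_\sigma$ over all $d$-subsets $\sigma\subset\tau$ is a spanning tree on $\tau\sqcup[\bar d]$ in which every vertex of $[\bar d]$ has degree $2$. An $(n,d)$-matching stack is a collection of bijections (partial matchings) $M_{I,\bar J}$ between $I$ and $\bar J$, one for each pair $I\subseteq[n]$, $\bar J\subseteq[\bar d]$ with $|I|=|\bar J|$, viewed as subgraphs of the complete bipartite graph on $[n]\sqcup[\bar d]$. It is a matching left-semi-ensemble if (Closure) whenever $I'\subseteq I$, $\bar J'\subseteq\bar J$ and $M_{I,\bar J}$ contains a perfect matching between $I'$ and $\bar J'$, then $M_{I',\bar J'}\subseteq M_{I,\bar J}$; and (Left linkage) for all $I,\bar J$ with $|I|=|\bar J|+1$, the union of $M_{I',\bar J}$ over all $I'\subset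 I$ with $|I'|=|\bar J|$ is a spanning tree on $I\sqcup\bar J$ in which every vertex of $\bar J$ has degree $2$. The reduction of a pointed matching field is the matching stack defined by: for each $d$-subset $\sigma$, let $\bar\sigma=\{\bar j:\underline j\in\sigma\}$; then $M_{\sigma\cap[n],\,[\bar d]\setminus\bar\sigma}$ is the restriction of $M_\sigma$ to $\sigma\cap[n]$. (This is a bijection between pointed matching fields and matching stacks.) *)

theory Defs
  imports Main
begin

text \<open>Conventions. [n] = {1..n}, [bar d] = {1..d} (as nat).  The ground set
  [n] disjoint-union [underline d] is encoded in type nat + nat:
  Inl i for i in [n], Inr j for underline j.  Matchings are edge sets
  (bipartite graphs); a bipartite edge set E between A and B is viewed as
  an undirected graph on the vertex set A <+> B.\<close>

definition ground :: "nat \<Rightarrow> nat \<Rightarrow> (nat + nat) set" where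
  "ground n d = Inl ` {1..n} \<union> Inr ` {1..d}"

definition is_pm :: "'a set \<Rightarrow> 'b set \<Rightarrow> ('a \<times> 'b) set \<Rightarrow> bool" where
  "is_pm A B E \<longleftrightarrow> E \<subseteq> A \<times> B \<and> (\<forall>a\<in>A. \<exists>!b. (a, b) \<in> E) \<and> (\<forall>b\<in>B. \<exists>!a. (a, b) \<in> E)"

definition bip_adj :: "('a \<times> 'b) set \<Rightarrow> ('a + 'b) \<Rightarrow> ('a + 'b) \<Rightarrow> bool" where
  "bip_adj E u v \<longleftrightarrow> (\<exists>a b. (a, b) \<in> E \<and> ((u = Inl a \<and> v = Inr b) \<or> (u = Inr b \<and> v = Inl a)))"

definition bip_cycle :: "('a \<times> 'b) set \<Rightarrow> ('a + 'b) list \<Rightarrow> bool" where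
  "bip_cycle E vs \<longleftrightarrow> 3 \<le> length vs \<and> distinct vs \<and>
     (\<forall>i < length vs. bip_adj E (vs ! i) (vs ! ((i + 1) mod length vs)))"

definition bip_spanning_tree :: "'a set \<Rightarrow> 'b set \<Rightarrow> ('a \<times> 'b) set \<Rightarrow> bool" where
  "bip_spanning_tree A B E \<longleftrightarrow> E \<subseteq> A \<times> B \<and>
     (\<forall>u \<in> A <+> B. \<forall>v \<in> A <+> B. (u, v) \<in> {(x, y). bip_adj E x y}\<^sup>*) \<and>
     \<not> (\<exists>vs. bip_cycle E vs)"

definition right_deg2 :: "'b set \<Rightarrow> ('a \<times> 'b) set \<Rightarrow> bool" where
  "right_deg2 B E \<longleftrightarrow> (\<forall>b\<in>B. card {a. (a, b) \<in> E} = 2)"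

text \<open>Pointed (n+d,d)-matching field.  M sigma is the graph of the bijection
  sigma -> [bar d] for d-subsets sigma of the ground set; for other sets
  (not in the domain) M is normalised to the empty set.\<close>
definition pointed_matching_field ::
  "nat \<Rightarrow> nat \<Rightarrow> ((nat + nat) set \<Rightarrow> ((nat + nat) \<times> nat) set) \<Rightarrow> bool" where
  "pointed_matching_field n d M \<longleftrightarrow>
     (\<forall>\<sigma>. if \<sigma> \<subseteq> ground n d \<and> card \<sigma> = d
           then is_pm \<sigma> {1..d} (M \<sigma>) \<and> (\<forall>j. Inr j \<in> \<sigma> \<longrightarrow> (Inr j, j) \<in> M \<sigma>)
           else M \<sigma> = {})"

definition linkage_pmf ::
  "nat \<Rightarrow> nat \<Rightarrow> ((nat + nat) set \<Rightarrow> ((nat + nat) \<times> nat) set) \<Rightarrow> bool" where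
  "linkage_pmf n d M \<longleftrightarrow>
     (\<forall>\<tau>. \<tau> \<subseteq> ground n d \<and> card \<tau> = d + 1 \<longrightarrow>
        (let G = \<Union>{M \<sigma> | \<sigma>. \<sigma> \<subseteq> \<tau> \<and> card \<sigma> = d}
         in bip_spanning_tree \<tau> {1..d} G \<and> right_deg2 {1..d} G))"

definition matching_stack ::
  "nat \<Rightarrow> nat \<Rightarrow> (nat set \<Rightarrow> nat set \<Rightarrow> (nat \<times> nat) set) \<Rightarrow> bool" where
  "matching_stack n d M \<longleftrightarrow>
     (\<forall>I J. if I \<subseteq> {1..n} \<and> J \<subseteq> {1..d} \<and> card I = card J
           then is_pm I J (M I J) else M I J = {})"

definition stack_closure ::
  "nat \<Rightarrow> nat \<Rightarrow> (nat set \<Rightarrow> nat set \<Rightarrow> (nat \<times> nat) set) \<Rightarrow> bool" where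
  "stack_closure n d M \<longleftrightarrow>
     (\<forall>I J I' J'. I \<subseteq> {1..n} \<and> J \<subseteq> {1..d} \<and> card I = card J \<and>
        I' \<subseteq> I \<and> J' \<subseteq> J \<and> (\<exists>N. N \<subseteq> M I J \<and> is_pm I' J' N)
        \<longrightarrow> M I' J' \<subseteq> M I J)"

definition stack_left_linkage ::
  "nat \<Rightarrow> nat \<Rightarrow> (nat set \<Rightarrow> nat set \<Rightarrow> (nat \<times> nat) set) \<Rightarrow> bool" where
  "stack_left_linkage n d M \<longleftrightarrow>
     (\<forall>I J. I \<subseteq> {1..n} \<and> J \<subseteq> {1..d} \<and> card I = card J + 1 \<longrightarrow>
        (let G = \<Union>{M I' J | I'. I' \<subseteq> I \<and> card I' = card J}
         in bip_spanning_tree I J G \<and> right_deg2 J G))"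

definition matching_left_semi_ensemble ::
  "nat \<Rightarrow> nat \<Rightarrow> (nat set \<Rightarrow> nat set \<Rightarrow> (nat \<times> nat) set) \<Rightarrow> bool" where
  "matching_left_semi_ensemble n d M \<longleftrightarrow>
     matching_stack n d M \<and> stack_closure n d M \<and> stack_left_linkage n d M"

text \<open>Reduction: M_{I,J} is M_sigma restricted to sigma \<inter> [n], where
  sigma = I \<union> underline([d] - J) (the unique d-subset with sigma \<inter> [n] = I and
  [bar d] - bar sigma = J).\<close>
definition reduction ::
  "nat \<Rightarrow> nat \<Rightarrow> ((nat + nat) set \<Rightarrow> ((nat + nat) \<times> nat) set)
     \<Rightarrow> (nat set \<Rightarrow> nat set \<Rightarrow> (nat \<times> nat) set)" where
  "reduction n d M = (\<lambda>I J.
     if I \<subseteq> {1..n} \<and> J \<subseteq> {1..d} \<and> card I = card J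
     then {(i, j). (Inl i, j) \<in> M (Inl ` I \<union> Inr ` ({1..d} - J))}
     else {})"

end

(*
  Fix I \<subseteq> [n] and J \<subseteq> [d] with |I| = |J| + 1 and put tau = I \<union> underline([d] - J). The d-subsets
  of tau are tau minus one point, so the graph that linkage of the pointed field examines at tau
  consists of the left-linkage graph W = \<Union>_i M_{I-i,J}, the matchings M_{I,J+k} for k \<notin> J and
  the edges underline k -- bar k. In M_{I,J+k} the vertex bar k is matched to some m_k \<in> I. If all
  other edges of the M_{I,J+k} lie in W, the graph is W with the pendant paths m_k -- bar k --
  underline k attached, and attaching pendant paths neither creates nor destroys cycles,
  connectivity or right degrees 2. Those other edges do lie in W under either hypothesis: if
  bar j (j \<in> J) has degree 2, because bar j already has two neighbours in W; under closure,
  because M_{I-m_k,J} \<subseteq> M_{I,J+k}. Conversely, linkage yields closure: in the tree W the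
  perfect matchings M_{I-i,J-k} and M_{I,J} - (i,k) coincide, and removing such edges one at a
  time shrinks M_{I,J} to any M_{I',J'} it contains a perfect matching of.
*)

theory Submission
  imports Defs
begin

section \<open>Bipartite graphs: reachability and cycles\<close>

abbreviation bip_reach :: "('a \<times> 'b) set \<Rightarrow> ('a + 'b) rel" where
  "bip_reach E \<equiv> {(x, y). bip_adj E x y}\<^sup>*"

abbreviation bip_connected :: "('a + 'b) set \<Rightarrow> ('a \<times> 'b) set \<Rightarrow> bool" where
  "bip_connected V E \<equiv> \<forall>u \<in> V. \<forall>v \<in> V. (u, v) \<in> bip_reach E"

abbreviation bip_acyclic :: "('a \<times> 'b) set \<Rightarrow> bool" where
  "bip_acyclic E \<equiv> \<not> (\<exists>vs. bip_cycle E vs)"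

lemma bip_adj_Inl_Inr [simp]: "bip_adj E (Inl a) (Inr b) \<longleftrightarrow> (a, b) \<in> E"
  and bip_adj_Inr_Inl [simp]: "bip_adj E (Inr b) (Inl a) \<longleftrightarrow> (a, b) \<in> E"
  unfolding bip_adj_def by blast+

lemma bip_adj_sym: "bip_adj E u v \<Longrightarrow> bip_adj E v u"
  unfolding bip_adj_def by blast

lemma bip_adj_mono: "bip_adj E u v \<Longrightarrow> E \<subseteq> E' \<Longrightarrow> bip_adj E' u v"
  unfolding bip_adj_def by blast

lemma bip_adj_irrefl: "\<not> bip_adj E u u"
  unfolding bip_adj_def by blast

lemma bip_reach_sym: "(u, v) \<in> bip_reach E \<Longrightarrow> (v, u) \<in> bip_reach E"
  by (metis (mono_tags, lifting) bip_adj_sym mem_Collect_eq sym_def sym_rtrancl symD split_conv)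

lemma bip_reach_map:
  assumes "(u, v) \<in> bip_reach E"
    and "\<And>x y. bip_adj E x y \<Longrightarrow> f x = f y \<or> bip_adj E' (f x) (f y)"
  shows "(f u, f v) \<in> bip_reach E'"
  using assms(1)
proof (induction rule: rtrancl_induct)
  case (step y z)
  then show ?case
    using assms(2)[of y z] by (auto intro: rtrancl_into_rtrancl)
qed simp

lemma bip_cycle_map:
  assumes "bip_cycle E vs" "inj_on f (set vs)"
    and "\<And>x y. x \<in> set vs \<Longrightarrow> y \<in> set vs \<Longrightarrow> bip_adj E x y \<Longrightarrow> bip_adj E' (f x) (f y)"
  shows "bip_cycle E' (map f vs)"
  unfolding bip_cycle_def
proof (intro conjI allI impI)
  show "3 \<le> length (map f vs)" "distinct (map f vs)"
    using assms unfolding bip_cycle_def by (auto simp: distinct_map)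
  fix i assume i: "i < length (map f vs)"
  then have "(i + 1) mod length vs < length vs" by (intro mod_less_divisor) auto
  then show "bip_adj E' (map f vs ! i) (map f vs ! ((i + 1) mod length (map f vs)))"
    using assms i unfolding bip_cycle_def by (auto intro!: assms(3))
qed

lemma bip_cycle_two_neighbours:
  assumes "bip_cycle E vs" "v \<in> set vs"
  obtains x y where "x \<noteq> y" "x \<in> set vs" "y \<in> set vs" "bip_adj E v x" "bip_adj E v y"
proof -
  let ?L = "length vs"
  have L: "3 \<le> ?L" "distinct vs"
    and adj: "\<And>i. i < ?L \<Longrightarrow> bip_adj E (vs ! i) (vs ! ((i + 1) mod ?L))"
    using assms unfolding bip_cycle_def by auto
  obtain p where p: "p < ?L" "vs ! p = v" using assms(2) by (metis in_set_conv_nth)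
  define q where "q = (if p = 0 then ?L - 1 else p - 1)"
  define r where "r = (if p + 1 = ?L then 0 else p + 1)"
  have q: "q < ?L" "(q + 1) mod ?L = p" unfolding q_def using L p by auto
  have r: "r < ?L" "(p + 1) mod ?L = r" unfolding r_def using L p by auto
  have "bip_adj E v (vs ! q)" using adj[OF q(1)] q(2) p bip_adj_sym by metis
  moreover have "bip_adj E v (vs ! r)" using adj p r by metis
  moreover have "vs ! r \<noteq> vs ! q"
    using L q r p unfolding r_def q_def by (auto simp: nth_eq_iff_index_eq)
  ultimately show ?thesis using that q r by (metis nth_mem)
qed

definition simple_path :: "('v \<Rightarrow> 'v \<Rightarrow> bool) \<Rightarrow> 'v set \<Rightarrow> 'v list \<Rightarrow> bool" where
  "simple_path R V xs \<longleftrightarrow> set xs \<subseteq> V \<and> distinct xs \<and> xs \<noteq> [] \<and>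
     (\<forall>i. i + 1 < length xs \<longrightarrow> R (xs ! i) (xs ! (i + 1)))"

lemma simple_path_Cons:
  assumes "simple_path R V xs" "w \<in> V" "w \<notin> set xs" "R w (hd xs)"
  shows "simple_path R V (w # xs)"
  using assms unfolding simple_path_def by (auto simp: nth_Cons hd_conv_nth split: nat.split)

lemma longest_simple_path:
  assumes "finite V" "v \<in> V"
  obtains xs where "simple_path R V xs" "\<And>ys. simple_path R V ys \<Longrightarrow> length ys \<le> length xs"
proof -
  have "simple_path R V [v]" using assms(2) unfolding simple_path_def by auto
  moreover have "length xs < card V + 1" if "simple_path R V xs" for xs
    using that assms(1) unfolding simple_path_def by (metis card_mono distinct_card less_Suc_eq_le Suc_eq_plus1)
  ultimately show ?thesis
    using that ex_has_greatest_nat[of "simple_path R V" "[v]" length "card V + 1"] by blast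
qed

text \<open>The first vertex of a longest path has all its neighbours on the path; one of them other
  than its successor closes a cycle.\<close>
lemma cycle_if_two_neighbours:
  fixes R :: "'v \<Rightarrow> 'v \<Rightarrow> bool"
  assumes fin: "finite V" and ne: "V \<noteq> {}"
    and deg: "\<And>v. v \<in> V \<Longrightarrow> \<exists>w1 w2. w1 \<noteq> w2 \<and> w1 \<in> V \<and> w2 \<in> V \<and> R v w1 \<and> R v w2"
    and irrefl: "\<And>v. \<not> R v v" and sym: "\<And>u v. R u v \<Longrightarrow> R v u"
  shows "\<exists>vs. 3 \<le> length vs \<and> distinct vs \<and> (\<forall>i < length vs. R (vs ! i) (vs ! ((i + 1) mod length vs)))"
proof -
  obtain xs where px: "simple_path R V xs" and longest: "\<And>ys. simple_path R V ys \<Longrightarrow> length ys \<le> length xs"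
    using longest_simple_path[OF fin] ne by blast
  have xsV: "set xs \<subseteq> V" and dxs: "distinct xs" and nxs: "xs \<noteq> []"
    and cxs: "\<And>i. i + 1 < length xs \<Longrightarrow> R (xs ! i) (xs ! (i + 1))"
    using px unfolding simple_path_def by auto
  let ?v = "xs ! 0"
  have on_path: "w \<in> set xs" if "w \<in> V" "R ?v w" for w
  proof (rule ccontr)
    assume "w \<notin> set xs"
    then have "simple_path R V (w # xs)"
      using simple_path_Cons[OF px \<open>w \<in> V\<close>] sym[OF that(2)] nxs by (simp add: hd_conv_nth)
    then show False using longest by fastforce
  qed
  have "?v \<in> V" using xsV nxs by (simp add: subset_iff)
  then obtain w where w: "w \<in> set xs" "R ?v w" "length xs < 2 \<or> w \<noteq> xs ! 1"
    using deg on_path by metis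
  obtain m where m: "m < length xs" "xs ! m = w" using w(1) by (metis in_set_conv_nth)
  have "m \<noteq> 0" using irrefl w(2) m(2) by metis
  moreover have "m \<noteq> 1" using w(3) m by auto
  ultimately have m2: "2 \<le> m" by simp
  define vs where "vs = take (m + 1) xs"
  have lv: "length vs = m + 1" unfolding vs_def using m by simp
  have nth: "\<And>i. i \<le> m \<Longrightarrow> vs ! i = xs ! i" unfolding vs_def by simp
  show ?thesis
  proof (intro exI conjI allI impI)
    show "3 \<le> length vs" using lv m2 by simp
    show "distinct vs" unfolding vs_def using dxs by simp
    fix i assume i: "i < length vs"
    show "R (vs ! i) (vs ! ((i + 1) mod length vs))"
    proof (cases "i = m")
      case True
      then show ?thesis using lv nth[of 0] nth[of m] m sym[OF w(2)] by simp
    next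
      case False
      then show ?thesis using i lv nth[of i] nth[of "i + 1"] cxs[of i] m by simp
    qed
  qed
qed

section \<open>Perfect matchings\<close>

lemma is_pm_memD: "is_pm A B P \<Longrightarrow> (a, b) \<in> P \<Longrightarrow> a \<in> A \<and> b \<in> B"
  unfolding is_pm_def by blast

lemma is_pm_left_unique: "is_pm A B P \<Longrightarrow> (a, b) \<in> P \<Longrightarrow> (a, b') \<in> P \<Longrightarrow> b = b'"
  unfolding is_pm_def by blast

lemma is_pm_right_unique: "is_pm A B P \<Longrightarrow> (a, b) \<in> P \<Longrightarrow> (a', b) \<in> P \<Longrightarrow> a = a'"
  unfolding is_pm_def by blast

lemma is_pm_left_ex: "is_pm A B P \<Longrightarrow> a \<in> A \<Longrightarrow> \<exists>b. (a, b) \<in> P"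
  unfolding is_pm_def by blast

lemma is_pm_right_ex: "is_pm A B P \<Longrightarrow> b \<in> B \<Longrightarrow> \<exists>a. (a, b) \<in> P"
  unfolding is_pm_def by blast

lemma is_pm_subset_eq:
  assumes P: "is_pm A B P" and Q: "is_pm A B Q" and "P \<subseteq> Q"
  shows "P = Q"
proof
  show "Q \<subseteq> P"
  proof clarify
    fix a b assume "(a, b) \<in> Q"
    moreover obtain b' where "(a, b') \<in> P"
      using is_pm_left_ex[OF P] is_pm_memD[OF Q \<open>(a, b) \<in> Q\<close>] by blast
    ultimately show "(a, b) \<in> P"
      using is_pm_left_unique[OF Q] \<open>P \<subseteq> Q\<close> by blast
  qed
qed (fact \<open>P \<subseteq> Q\<close>)

lemma is_pm_Diff_edge:
  assumes P: "is_pm A B P" and ab: "(a, b) \<in> P"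
  shows "is_pm (A - {a}) (B - {b}) (P - {(a, b)})"
  unfolding is_pm_def
proof (intro conjI ballI)
  show "P - {(a, b)} \<subseteq> (A - {a}) \<times> (B - {b})"
    using is_pm_memD[OF P] is_pm_left_unique[OF P ab] is_pm_right_unique[OF P ab] by fast
  show "\<exists>!y. (x, y) \<in> P - {(a, b)}" if "x \<in> A - {a}" for x
    using that is_pm_left_ex[OF P] is_pm_left_unique[OF P] by blast
  show "\<exists>!x. (x, y) \<in> P - {(a, b)}" if "y \<in> B - {b}" for y
    using that is_pm_right_ex[OF P] is_pm_right_unique[OF P] by blast
qed

lemma is_pm_card_eq: "is_pm A B P \<Longrightarrow> card A = card B"
proof -
  assume P: "is_pm A B P"
  then have "bij_betw fst P A" "bij_betw snd P B"
    unfolding bij_betw_def inj_on_def is_pm_def by force+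
  then show ?thesis by (metis bij_betw_same_card)
qed

lemma is_pm_Diff_other_left:
  assumes P: "is_pm A B P" and Q: "is_pm A B Q" and ab: "(a, b) \<in> P - Q"
  obtains b' where "b' \<noteq> b" "(a, b') \<in> Q - P"
proof -
  obtain b' where "(a, b') \<in> Q" using is_pm_left_ex[OF Q] is_pm_memD[OF P] ab by blast
  moreover from this have "b' \<noteq> b" using ab by auto
  moreover from this have "(a, b') \<notin> P" using is_pm_left_unique[OF P, of a b b'] ab by auto
  ultimately show ?thesis using that by blast
qed

lemma is_pm_Diff_other_right:
  assumes P: "is_pm A B P" and Q: "is_pm A B Q" and ab: "(a, b) \<in> P - Q"
  obtains a' where "a' \<noteq> a" "(a', b) \<in> Q - P"
proof -
  obtain a' where "(a', b) \<in> Q" using is_pm_right_ex[OF Q] is_pm_memD[OF P] ab by blast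
  moreover from this have "a' \<noteq> a" using ab by auto
  moreover from this have "(a', b) \<notin> P" using is_pm_right_unique[OF P, of a b a'] ab by auto
  ultimately show ?thesis using that by blast
qed

lemma is_pm_sym_diff_two_neighbours:
  assumes P: "is_pm A B P" and Q: "is_pm A B Q" and "bip_adj (sym_diff P Q) v w"
  shows "\<exists>w1 w2. w1 \<noteq> w2 \<and> bip_adj (sym_diff P Q) v w1 \<and> bip_adj (sym_diff P Q) v w2"
proof -
  have other_left: "\<exists>b'. b' \<noteq> b \<and> (a, b') \<in> sym_diff P Q" if "(a, b) \<in> sym_diff P Q" for a b
  proof (cases "(a, b) \<in> P - Q")
    case True
    then show ?thesis by (rule is_pm_Diff_other_left[OF P Q]) blast
  next
    case False
    with that have "(a, b) \<in> Q - P" by blast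
    then show ?thesis by (rule is_pm_Diff_other_left[OF Q P]) blast
  qed
  have other_right: "\<exists>a'. a' \<noteq> a \<and> (a', b) \<in> sym_diff P Q" if "(a, b) \<in> sym_diff P Q" for a b
  proof (cases "(a, b) \<in> P - Q")
    case True
    then show ?thesis by (rule is_pm_Diff_other_right[OF P Q]) blast
  next
    case False
    with that have "(a, b) \<in> Q - P" by blast
    then show ?thesis by (rule is_pm_Diff_other_right[OF Q P]) blast
  qed
  obtain a b where ab: "(a, b) \<in> sym_diff P Q" "v = Inl a \<or> v = Inr b"
    using assms(3) unfolding bip_adj_def by blast
  from ab(2) show ?thesis
  proof
    assume "v = Inl a"
    with other_left[OF ab(1)] ab(1) show ?thesis by (metis bip_adj_Inl_Inr sum.inject(2))
  next
    assume "v = Inr b"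
    with other_right[OF ab(1)] ab(1) show ?thesis by (metis bip_adj_Inr_Inl sum.inject(1))
  qed
qed

text \<open>Otherwise every vertex met by the symmetric difference of the two matchings meets it twice,
  so the symmetric difference would contain a cycle.\<close>
lemma is_pm_unique_in_acyclic:
  assumes P: "is_pm A B P" and Q: "is_pm A B Q" and fin: "finite A" "finite B"
    and sub: "P \<union> Q \<subseteq> E" and acyc: "bip_acyclic E"
  shows "P = Q"
proof (rule ccontr)
  assume "P \<noteq> Q"
  let ?D = "sym_diff P Q"
  define V where "V = {v. \<exists>w. bip_adj ?D v w}"
  have "?D \<subseteq> A \<times> B" using P Q unfolding is_pm_def by auto
  then have "V \<subseteq> Inl ` A \<union> Inr ` B" unfolding V_def bip_adj_def by blast
  then have finV: "finite V" using fin finite_subset by blast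
  obtain x where "x \<in> ?D" using \<open>P \<noteq> Q\<close> by blast
  then obtain a b where "(a, b) \<in> ?D" by (cases x) auto
  then have "Inl a \<in> V" unfolding V_def by (metis bip_adj_Inl_Inr mem_Collect_eq)
  then have neV: "V \<noteq> {}" by auto
  have "\<exists>w1 w2. w1 \<noteq> w2 \<and> w1 \<in> V \<and> w2 \<in> V \<and> bip_adj ?D v w1 \<and> bip_adj ?D v w2"
    if v: "v \<in> V" for v
  proof -
    obtain w where "bip_adj ?D v w" using v unfolding V_def by blast
    then obtain w1 w2 where "w1 \<noteq> w2" "bip_adj ?D v w1" "bip_adj ?D v w2"
      using is_pm_sym_diff_two_neighbours[OF P Q] by blast
    moreover from this have "w1 \<in> V" "w2 \<in> V" unfolding V_def using bip_adj_sym by blast+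
    ultimately show ?thesis by blast
  qed
  then obtain vs where "3 \<le> length vs \<and> distinct vs \<and>
      (\<forall>i < length vs. bip_adj ?D (vs ! i) (vs ! ((i + 1) mod length vs)))"
    using cycle_if_two_neighbours[of V "bip_adj ?D", OF finV neV _ bip_adj_irrefl bip_adj_sym] by blast
  then have "bip_cycle E vs" unfolding bip_cycle_def
    using bip_adj_mono[of ?D _ _ E] sub by blast
  then show False using acyc by blast
qed

section \<open>Attaching pendant paths\<close>

text \<open>Each k \<in> K is hung from p k by the path p k -- k -- Inr k, whose end Inr k is a new
  left vertex of degree one.\<close>
definition attach_pendant_paths :: "('a \<times> 'b) set \<Rightarrow> ('b \<Rightarrow> 'a) \<Rightarrow> 'b set \<Rightarrow> (('a + 'b) \<times> 'b) set" where
  "attach_pendant_paths E p K =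
     {(Inl a, b) | a b. (a, b) \<in> E} \<union> (\<lambda>k. (Inl (p k), k)) ` K \<union> (\<lambda>k. (Inr k, k)) ` K"

lemma attach_pendant_paths_Inl [simp]:
  "(Inl a, b) \<in> attach_pendant_paths E p K \<longleftrightarrow> (a, b) \<in> E \<or> (b \<in> K \<and> a = p b)"
  and attach_pendant_paths_Inr [simp]:
  "(Inr k, b) \<in> attach_pendant_paths E p K \<longleftrightarrow> b = k \<and> k \<in> K"
  unfolding attach_pendant_paths_def by auto

lemma bip_cycle_attach_pendant_paths:
  assumes "bip_cycle E vs"
  shows "bip_cycle (attach_pendant_paths E p K) (map (map_sum Inl id) vs)"
proof (rule bip_cycle_map[OF assms])
  show "inj_on (map_sum Inl id) (set vs)"
    by (meson inj_on_subset inj_Inl inj_on_id subset_UNIV sum.inj_map)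
qed (auto simp: bip_adj_def)

lemma bip_reach_attach_pendant_paths_embed:
  "(u, v) \<in> bip_reach E \<Longrightarrow> (map_sum Inl id u, map_sum Inl id v) \<in> bip_reach (attach_pendant_paths E p K)"
  by (erule bip_reach_map) (auto simp: bip_adj_def)

context
  fixes A :: "'a set" and B K :: "'b set" and E :: "('a \<times> 'b) set" and p :: "'b \<Rightarrow> 'a"
  assumes E_sub: "E \<subseteq> A \<times> B" and disj: "B \<inter> K = {}" and p_into: "p ` K \<subseteq> A"
begin

lemma attach_pendant_paths_cycle_avoids:
  assumes vs: "bip_cycle (attach_pendant_paths E p K) vs"
  shows attach_pendant_paths_cycle_avoids_tip: "Inl (Inr k) \<notin> set vs"
    and attach_pendant_paths_cycle_avoids_mid: "k \<in> K \<Longrightarrow> Inr k \<notin> set vs"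
proof -
  let ?G = "attach_pendant_paths E p K"
  show no_tip: "Inl (Inr k) \<notin> set vs" for k
  proof
    assume "Inl (Inr k) \<in> set vs"
    then obtain x y where "x \<noteq> y" "bip_adj ?G (Inl (Inr k)) x" "bip_adj ?G (Inl (Inr k)) y"
      by (rule bip_cycle_two_neighbours[OF vs])
    then show False unfolding bip_adj_def by auto
  qed
  assume k: "k \<in> K"
  show "Inr k \<notin> set vs"
  proof
    assume "Inr k \<in> set vs"
    then obtain x y where xy: "x \<noteq> y" "x \<in> set vs" "y \<in> set vs"
      "bip_adj ?G (Inr k) x" "bip_adj ?G (Inr k) y"
      by (rule bip_cycle_two_neighbours[OF vs])
    have "(a, k) \<notin> E" for a using E_sub disj k by blast
    then have "z = Inl (Inl (p k))" if z: "z \<in> set vs" "bip_adj ?G (Inr k) z" for z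
    proof -
      obtain c where "z = Inl c" "(c, k) \<in> ?G" using z(2) unfolding bip_adj_def by auto
      with z(1) \<open>\<And>a. (a, k) \<notin> E\<close> no_tip show ?thesis by (cases c) auto
    qed
    then show False using xy by metis
  qed
qed

lemma bip_acyclic_attach_pendant_paths_iff:
  "bip_acyclic (attach_pendant_paths E p K) \<longleftrightarrow> bip_acyclic E"
  (is "bip_acyclic ?G \<longleftrightarrow> _")
proof
  assume "bip_acyclic ?G"
  then show "bip_acyclic E" using bip_cycle_attach_pendant_paths by blast
next
  assume acyc: "bip_acyclic E"
  show "bip_acyclic ?G"
  proof
    assume "\<exists>vs. bip_cycle ?G vs"
    then obtain vs where vs: "bip_cycle ?G vs" by blast
    note no_tip = attach_pendant_paths_cycle_avoids_tip[OF vs]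
      and no_mid = attach_pendant_paths_cycle_avoids_mid[OF vs]
    let ?h = "map_sum projl id :: ('a + 'b) + 'b \<Rightarrow> 'a + 'b"
    have "bip_cycle E (map ?h vs)"
    proof (rule bip_cycle_map[OF vs])
      have "(\<exists>a. z = Inl (Inl a)) \<or> (\<exists>b. z = Inr b)" if "z \<in> set vs" for z
        using that no_tip by (metis sum.exhaust)
      then show "inj_on ?h (set vs)"
        by (intro inj_onI) (metis map_sum.simps(1,2) sum.sel(1) id_apply sum.inject(2) sum.distinct(1))
      show "bip_adj E (?h x) (?h y)" if xy: "x \<in> set vs" "y \<in> set vs" "bip_adj ?G x y" for x y
      proof -
        obtain c b where cb: "(c, b) \<in> ?G" "(x = Inl c \<and> y = Inr b) \<or> (x = Inr b \<and> y = Inl c)"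
          using xy(3) unfolding bip_adj_def by blast
        then have "Inl c \<in> set vs" "Inr b \<in> set vs" using xy(1,2) by auto
        then obtain a where "c = Inl a" "b \<notin> K" using no_tip no_mid by (cases c) auto
        with cb show ?thesis by auto
      qed
    qed
    then show False using acyc by blast
  qed
qed

lemma bip_connected_attach_pendant_pathsD:
  assumes conn: "bip_connected ((A <+> K) <+> (B \<union> K)) (attach_pendant_paths E p K)"
  shows "bip_connected (A <+> B) E"
proof -
  let ?G = "attach_pendant_paths E p K"
  define r where "r = case_sum (case_sum Inl (\<lambda>k. Inl (p k))) (\<lambda>b. if b \<in> K then Inl (p b) else Inr b)"
  have r_edge: "r (Inl c) = r (Inr b) \<or> bip_adj E (r (Inl c)) (r (Inr b))" if "(c, b) \<in> ?G" for c b
  proof (cases c)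
    case (Inl a)
    then have "(a, b) \<in> E \<and> b \<notin> K \<or> (b \<in> K \<and> a = p b)" using that E_sub disj by auto
    then show ?thesis unfolding r_def using Inl by auto
  qed (use that in \<open>auto simp: r_def\<close>)
  have "r x = r y \<or> bip_adj E (r x) (r y)" if "bip_adj ?G x y" for x y
    using that r_edge bip_adj_sym unfolding bip_adj_def[of ?G] by metis
  moreover have "r (map_sum Inl id u) = u" if "u \<in> A <+> B" for u
    using that disj unfolding r_def by auto
  moreover have "map_sum Inl id u \<in> (A <+> K) <+> (B \<union> K)" if "u \<in> A <+> B" for u
    using that by auto
  ultimately show ?thesis
    using bip_reach_map[of _ _ ?G r E] conn by metis
qed

lemma bip_connected_attach_pendant_pathsI:
  assumes conn: "bip_connected (A <+> B) E"
  shows "bip_connected ((A <+> K) <+> (B \<union> K)) (attach_pendant_paths E p K)"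
proof -
  let ?G = "attach_pendant_paths E p K" and ?g = "map_sum Inl id :: 'a + 'b \<Rightarrow> ('a + 'b) + 'b"
  have tip: "(Inr k, Inl (Inl (p k))) \<in> bip_reach ?G" if "k \<in> K" for k
    using that by (intro r_into_rtrancl) simp
  have "(Inl (Inr k), Inr k) \<in> bip_reach ?G" if "k \<in> K" for k
    using that by (intro r_into_rtrancl) simp
  with tip have hub: "(Inl (Inr k), Inl (Inl (p k))) \<in> bip_reach ?G" if "k \<in> K" for k
    using that by (meson rtrancl_trans)
  have reach: "\<exists>u \<in> A <+> B. (x, ?g u) \<in> bip_reach ?G" if "x \<in> (A <+> K) <+> (B \<union> K)" for x
  proof -
    from that consider (left) a where "x = Inl (Inl a)" "a \<in> A"
      | (right) b where "x = Inr b" "b \<in> B" | (pendant) k where "x \<in> {Inl (Inr k), Inr k}" "k \<in> K"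
      by blast
    then show ?thesis
    proof cases
      case left then show ?thesis by (intro bexI[of _ "Inl a"]) auto
    next
      case right then show ?thesis by (intro bexI[of _ "Inr b"]) auto
    next
      case pendant then show ?thesis using hub tip p_into by (intro bexI[of _ "Inl (p k)"]) auto
    qed
  qed
  show ?thesis
  proof (intro ballI)
    fix x y assume "x \<in> (A <+> K) <+> (B \<union> K)" "y \<in> (A <+> K) <+> (B \<union> K)"
    then obtain u v where "u \<in> A <+> B" "(x, ?g u) \<in> bip_reach ?G" "v \<in> A <+> B" "(y, ?g v) \<in> bip_reach ?G"
      using reach by meson
    then show "(x, y) \<in> bip_reach ?G"
      using bip_reach_attach_pendant_paths_embed conn bip_reach_sym by (meson rtrancl_trans)
  qed
qed

lemma bip_spanning_tree_attach_pendant_paths_iff: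
  "bip_spanning_tree (A <+> K) (B \<union> K) (attach_pendant_paths E p K) \<longleftrightarrow> bip_spanning_tree A B E"
  (is "bip_spanning_tree _ _ ?G \<longleftrightarrow> _")
proof -
  have "?G \<subseteq> (A <+> K) \<times> (B \<union> K)"
    using E_sub p_into unfolding attach_pendant_paths_def by blast
  then show ?thesis
    unfolding bip_spanning_tree_def
    using E_sub bip_connected_attach_pendant_pathsD bip_connected_attach_pendant_pathsI
      bip_acyclic_attach_pendant_paths_iff
    by blast
qed

lemma right_deg2_attach_pendant_paths_iff:
  "right_deg2 (B \<union> K) (attach_pendant_paths E p K) \<longleftrightarrow> right_deg2 B E"
  (is "right_deg2 _ ?G \<longleftrightarrow> _")
proof -
  have "{x. (x, b) \<in> ?G} = Inl ` {a. (a, b) \<in> E}" if "b \<in> B" for b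
  proof -
    have "x \<in> Inl ` {a. (a, b) \<in> E}" if "(x, b) \<in> ?G" for x
      using that \<open>b \<in> B\<close> disj by (cases x) auto
    then show ?thesis by auto
  qed
  then have on_B: "card {x. (x, b) \<in> ?G} = card {a. (a, b) \<in> E}" if "b \<in> B" for b
    using that by (simp add: card_image)
  have "{x. (x, k) \<in> ?G} = {Inl (p k), Inr k}" if "k \<in> K" for k
  proof -
    have "x \<in> {Inl (p k), Inr k}" if "(x, k) \<in> ?G" for x
      using that \<open>k \<in> K\<close> E_sub disj by (cases x) auto
    then show ?thesis using that by auto
  qed
  then have "card {x. (x, k) \<in> ?G} = 2" if "k \<in> K" for k
    using that by simp
  then show ?thesis unfolding right_deg2_def using on_B by auto
qed

end

section \<open>Pointed sets and pointed matchings\<close>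

text \<open>The set sigma = I \<union> underline([d] - J) of the paper, i.e. the one with sigma \<inter> [n] = I and
  [bar d] - bar sigma = J.\<close>
definition pointed_set :: "nat \<Rightarrow> nat set \<Rightarrow> nat set \<Rightarrow> (nat + nat) set" where
  "pointed_set d I J = I <+> ({1..d} - J)"

definition pointed_ext :: "nat \<Rightarrow> nat set \<Rightarrow> (nat \<times> nat) set \<Rightarrow> ((nat + nat) \<times> nat) set" where
  "pointed_ext d J P = {(Inl i, j) | i j. (i, j) \<in> P} \<union> (\<lambda>j. (Inr j, j)) ` ({1..d} - J)"

lemma pointed_set_Inl [simp]: "Inl i \<in> pointed_set d I J \<longleftrightarrow> i \<in> I"
  and pointed_set_Inr [simp]: "Inr k \<in> pointed_set d I J \<longleftrightarrow> k \<in> {1..d} - J"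
  unfolding pointed_set_def by auto

lemma pointed_ext_Inl [simp]: "(Inl i, j) \<in> pointed_ext d J P \<longleftrightarrow> (i, j) \<in> P"
  and pointed_ext_Inr [simp]: "(Inr k, j) \<in> pointed_ext d J P \<longleftrightarrow> j = k \<and> k \<in> {1..d} - J"
  unfolding pointed_ext_def by auto

lemma pointed_set_vimage:
  assumes "J \<subseteq> {1..d}"
  shows "Inl -` pointed_set d I J = I" "{1..d} - Inr -` pointed_set d I J = J"
  using assms unfolding pointed_set_def by auto

lemma pointed_set_subset_ground: "I \<subseteq> {1..n} \<Longrightarrow> pointed_set d I J \<subseteq> ground n d"
  unfolding pointed_set_def ground_def by auto

lemma card_pointed_set:
  assumes "finite I" "J \<subseteq> {1..d}"
  shows "card (pointed_set d I J) + card J = card I + d"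
proof -
  have "card ({1..d} - J) + card J = d"
    using assms(2) card_Diff_subset[of J "{1..d}"] card_mono[of "{1..d}" J] finite_subset[OF assms(2)] by simp
  then show ?thesis unfolding pointed_set_def using assms(1) by (simp add: card_Plus)
qed

lemma subset_groundE:
  assumes "\<sigma> \<subseteq> ground n d"
  obtains I J where "I \<subseteq> {1..n}" "J \<subseteq> {1..d}" "\<sigma> = pointed_set d I J"
    "card \<sigma> + card J = card I + d"
proof
  show I: "Inl -` \<sigma> \<subseteq> {1..n}" and "{1..d} - Inr -` \<sigma> \<subseteq> {1..d}"
    using assms unfolding ground_def by auto
  have "Inr -` \<sigma> \<subseteq> {1..d}" using assms unfolding ground_def by auto
  moreover have "x \<in> Inl ` Inl -` \<sigma> \<union> Inr ` Inr -` \<sigma>" if "x \<in> \<sigma>" for x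
    using that by (cases x) auto
  ultimately show \<sigma>: "\<sigma> = pointed_set d (Inl -` \<sigma>) ({1..d} - Inr -` \<sigma>)"
    unfolding pointed_set_def Plus_def by (auto simp: double_diff)
  then have "card \<sigma> = card (pointed_set d (Inl -` \<sigma>) ({1..d} - Inr -` \<sigma>))" by (rule arg_cong)
  then show "card \<sigma> + card ({1..d} - Inr -` \<sigma>) = card (Inl -` \<sigma>) + d"
    using card_pointed_set[OF finite_subset[OF I finite_atLeastAtMost] Diff_subset] by simp
qed

lemma card_pointed_set_eq:
  assumes "I \<subseteq> {1..n}" "J \<subseteq> {1..d}" "card I = card J"
  shows "card (pointed_set d I J) = d"
  using card_pointed_set[OF finite_subset[OF assms(1) finite_atLeastAtMost] assms(2)] assms(3) by simp

lemma is_pm_of_pointed_ext: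
  assumes J_sub: "J \<subseteq> {1..d}" and Q: "is_pm (pointed_set d I J) {1..d} (pointed_ext d J P)"
  shows "is_pm I J P"
proof -
  let ?Q = "pointed_ext d J P"
  have in_J: "j \<in> J" if "(i, j) \<in> P" for i j
  proof (rule ccontr)
    assume "j \<notin> J"
    moreover have "j \<in> {1..d}" using is_pm_memD[OF Q, of "Inl i" j] that by simp
    ultimately show False using is_pm_right_unique[OF Q, of "Inl i" j "Inr j"] that by simp
  qed
  show ?thesis unfolding is_pm_def
  proof (intro conjI ballI)
    show "P \<subseteq> I \<times> J"
    proof clarify
      fix i j assume "(i, j) \<in> P"
      then show "i \<in> I \<and> j \<in> J" using is_pm_memD[OF Q, of "Inl i" j] in_J by simp
    qed
    show "\<exists>!j. (i, j) \<in> P" if i: "i \<in> I" for i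
    proof -
      obtain j where ij: "(Inl i, j) \<in> ?Q" using is_pm_left_ex[OF Q, of "Inl i"] i by auto
      show ?thesis
      proof (rule ex1I[of _ j])
        show "(i, j) \<in> P" using ij by simp
        show "j' = j" if "(i, j') \<in> P" for j'
          using is_pm_left_unique[OF Q ij] that by (metis pointed_ext_Inl)
      qed
    qed
    show "\<exists>!i. (i, j) \<in> P" if j: "j \<in> J" for j
    proof -
      obtain x where x: "(x, j) \<in> ?Q" using is_pm_right_ex[OF Q] j J_sub by blast
      then obtain i where "x = Inl i" using j by (cases x) auto
      show ?thesis
      proof (rule ex1I[of _ i])
        show "(i, j) \<in> P" using x \<open>x = Inl i\<close> by simp
        show "i' = i" if "(i', j) \<in> P" for i'
          using is_pm_right_unique[OF Q x] that \<open>x = Inl i\<close> by (metis pointed_ext_Inl sum.inject(1))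
      qed
    qed
  qed
qed

lemma is_pm_pointed_ext:
  assumes J_sub: "J \<subseteq> {1..d}" and P: "is_pm I J P"
  shows "is_pm (pointed_set d I J) {1..d} (pointed_ext d J P)"
proof -
  let ?\<sigma> = "pointed_set d I J" and ?Q = "pointed_ext d J P"
  show ?thesis unfolding is_pm_def
  proof (intro conjI ballI)
    show "?Q \<subseteq> ?\<sigma> \<times> {1..d}"
    proof clarify
      fix x j assume "(x, j) \<in> ?Q"
      then show "x \<in> ?\<sigma> \<and> j \<in> {1..d}" using is_pm_memD[OF P] J_sub by (cases x) fastforce+
    qed
    show "\<exists>!j. (x, j) \<in> ?Q" if x: "x \<in> ?\<sigma>" for x
    proof (cases x)
      case (Inl i)
      then obtain j where ij: "(i, j) \<in> P" using is_pm_left_ex[OF P] x by auto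
      show ?thesis
      proof (rule ex1I[of _ j])
        show "(x, j) \<in> ?Q" using ij Inl by simp
        show "j' = j" if "(x, j') \<in> ?Q" for j'
          using is_pm_left_unique[OF P ij] that Inl by (metis pointed_ext_Inl)
      qed
    next
      case (Inr k)
      then show ?thesis using x by (intro ex1I[of _ k]) auto
    qed
    show "\<exists>!x. (x, j) \<in> ?Q" if j: "j \<in> {1..d}" for j
    proof (cases "j \<in> J")
      case True
      then obtain i where i: "(i, j) \<in> P" using is_pm_right_ex[OF P] by blast
      show ?thesis
      proof (rule ex1I[of _ "Inl i"])
        show "(Inl i, j) \<in> ?Q" using i by simp
        show "x = Inl i" if "(x, j) \<in> ?Q" for x
        proof (cases x)
          case (Inl i')
          then show ?thesis using is_pm_right_unique[OF P i, of i'] that by simp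
        qed (use that True in simp)
      qed
    next
      case False
      show ?thesis
      proof (rule ex1I[of _ "Inr j"])
        show "(Inr j, j) \<in> ?Q" using False j by simp
        show "x = Inr j" if "(x, j) \<in> ?Q" for x
          using that False is_pm_memD[OF P] by (cases x) auto
      qed
    qed
  qed
qed

lemma is_pm_pointed_ext_iff:
  "J \<subseteq> {1..d} \<Longrightarrow> is_pm (pointed_set d I J) {1..d} (pointed_ext d J P) \<longleftrightarrow> is_pm I J P"
  using is_pm_of_pointed_ext is_pm_pointed_ext by blast

lemma is_pm_eq_pointed_ext:
  assumes Q: "is_pm (pointed_set d I J) {1..d} Q" and diag: "\<And>j. j \<in> {1..d} - J \<Longrightarrow> (Inr j, j) \<in> Q"
  shows "Q = pointed_ext d J {(i, j). (Inl i, j) \<in> Q}"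
proof (intro equalityI subsetI)
  fix e assume e: "e \<in> Q"
  obtain x j where xj: "e = (x, j)" by fastforce
  show "e \<in> pointed_ext d J {(i, j). (Inl i, j) \<in> Q}"
  proof (cases x)
    case (Inr k)
    then have "Inr k \<in> pointed_set d I J" using is_pm_memD[OF Q] e xj by blast
    then have "k \<in> {1..d} - J" unfolding pointed_set_Inr .
    then have "j = k" using is_pm_left_unique[OF Q diag] e xj Inr by blast
    then show ?thesis using xj Inr \<open>k \<in> _\<close> by simp
  qed (use e xj in simp)
qed (auto simp: pointed_ext_def diag)

section \<open>The linkage graph of a matching stack\<close>

type_synonym stack = "nat set \<Rightarrow> nat set \<Rightarrow> (nat \<times> nat) set"

definition left_link :: "stack \<Rightarrow> nat set \<Rightarrow> nat set \<Rightarrow> (nat \<times> nat) set" where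
  "left_link S I J = (\<Union>i\<in>I. S (I - {i}) J)"

text \<open>The edges at I of the graph inspected by linkage at pointed_set d I J, see
  Union_unreduce_eq_link_graph.\<close>
definition link_edges :: "nat \<Rightarrow> stack \<Rightarrow> nat set \<Rightarrow> nat set \<Rightarrow> (nat \<times> nat) set" where
  "link_edges d S I J = left_link S I J \<union> (\<Union>k\<in>{1..d} - J. S I (insert k J))"

definition mate :: "stack \<Rightarrow> nat set \<Rightarrow> nat set \<Rightarrow> nat \<Rightarrow> nat" where
  "mate S I J k = (THE i. (i, k) \<in> S I (insert k J))"

lemma matching_stack_is_pm:
  "matching_stack n d S \<Longrightarrow> I \<subseteq> {1..n} \<Longrightarrow> J \<subseteq> {1..d} \<Longrightarrow> card I = card J \<Longrightarrow> is_pm I J (S I J)"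
  unfolding matching_stack_def by metis

lemma matching_stack_outside:
  "matching_stack n d S \<Longrightarrow> \<not> (I \<subseteq> {1..n} \<and> J \<subseteq> {1..d} \<and> card I = card J) \<Longrightarrow> S I J = {}"
  unfolding matching_stack_def by metis

context
  fixes n d :: nat and S :: stack and I J :: "nat set"
  assumes stack: "matching_stack n d S"
    and I_sub: "I \<subseteq> {1..n}" and J_sub: "J \<subseteq> {1..d}" and card_IJ: "card I = card J + 1"
begin

private lemma finite_I: "finite I" and finite_J: "finite J"
  using I_sub J_sub finite_subset by blast+

lemma is_pm_drop_left: "i \<in> I \<Longrightarrow> is_pm (I - {i}) J (S (I - {i}) J)"
  by (rule matching_stack_is_pm[OF stack]) (use I_sub J_sub card_IJ finite_I in auto)

lemma is_pm_add_right: "k \<in> {1..d} - J \<Longrightarrow> is_pm I (insert k J) (S I (insert k J))"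
  by (rule matching_stack_is_pm[OF stack]) (use I_sub J_sub card_IJ finite_J in auto)

lemma mate_mem: "k \<in> {1..d} - J \<Longrightarrow> (mate S I J k, k) \<in> S I (insert k J)"
  and mate_unique: "k \<in> {1..d} - J \<Longrightarrow> (i, k) \<in> S I (insert k J) \<Longrightarrow> i = mate S I J k"
proof -
  assume k: "k \<in> {1..d} - J"
  then have "\<exists>!i. (i, k) \<in> S I (insert k J)" using is_pm_add_right unfolding is_pm_def by blast
  then show "(mate S I J k, k) \<in> S I (insert k J)" "(i, k) \<in> S I (insert k J) \<Longrightarrow> i = mate S I J k"
    unfolding mate_def by (metis (mono_tags) theI', simp add: the1_equality)
qed

lemma mate_in: "k \<in> {1..d} - J \<Longrightarrow> mate S I J k \<in> I"
  using mate_mem is_pm_memD[OF is_pm_add_right] by blast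

lemma left_link_subset: "left_link S I J \<subseteq> I \<times> J"
  unfolding left_link_def using is_pm_drop_left unfolding is_pm_def by blast

lemma link_edges_outside:
  assumes "(i, b) \<in> link_edges d S I J" "b \<notin> J"
  shows "b \<in> {1..d} - J" "i = mate S I J b"
proof -
  have "(i, b) \<notin> left_link S I J" using left_link_subset assms(2) by auto
  then obtain k where k: "k \<in> {1..d} - J" "(i, b) \<in> S I (insert k J)"
    using assms(1) unfolding link_edges_def by blast
  then have "b = k" using is_pm_memD[OF is_pm_add_right] assms(2) by blast
  then show "b \<in> {1..d} - J" "i = mate S I J b" using k mate_unique by auto
qed

lemma link_edges_eq:
  assumes "\<And>i j. (i, j) \<in> link_edges d S I J \<Longrightarrow> j \<in> J \<Longrightarrow> (i, j) \<in> left_link S I J"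
  shows "link_edges d S I J = left_link S I J \<union> (\<lambda>k. (mate S I J k, k)) ` ({1..d} - J)"
proof
  show "link_edges d S I J \<subseteq> left_link S I J \<union> (\<lambda>k. (mate S I J k, k)) ` ({1..d} - J)"
    using assms link_edges_outside by fast
  show "left_link S I J \<union> (\<lambda>k. (mate S I J k, k)) ` ({1..d} - J) \<subseteq> link_edges d S I J"
    unfolding link_edges_def using mate_mem by blast
qed

lemma link_graph_tree_iff:
  assumes "\<And>i j. (i, j) \<in> link_edges d S I J \<Longrightarrow> j \<in> J \<Longrightarrow> (i, j) \<in> left_link S I J"
  shows "bip_spanning_tree (pointed_set d I J) {1..d} (pointed_ext d J (link_edges d S I J)) \<and>
      right_deg2 {1..d} (pointed_ext d J (link_edges d S I J))
    \<longleftrightarrow> bip_spanning_tree I J (left_link S I J) \<and> right_deg2 J (left_link S I J)"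
proof -
  let ?K = "{1..d} - J"
  have "pointed_ext d J (link_edges d S I J) = attach_pendant_paths (left_link S I J) (mate S I J) ?K"
    using link_edges_eq[OF assms] unfolding pointed_ext_def attach_pendant_paths_def by auto
  moreover have "{1..d} = J \<union> ?K" using J_sub by blast
  moreover have "mate S I J ` ?K \<subseteq> I" using mate_in by blast
  ultimately show ?thesis
    unfolding pointed_set_def
    using bip_spanning_tree_attach_pendant_paths_iff[OF left_link_subset]
      right_deg2_attach_pendant_paths_iff[OF left_link_subset]
    by (metis Diff_disjoint)
qed

lemma left_link_two_at:
  assumes "j \<in> J"
  obtains i1 i2 where "i1 \<noteq> i2" "(i1, j) \<in> left_link S I J" "(i2, j) \<in> left_link S I J"
proof -
  obtain i0 where i0: "i0 \<in> I" using card_IJ by fastforce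
  obtain i1 where i1: "(i1, j) \<in> S (I - {i0}) J" using is_pm_right_ex[OF is_pm_drop_left[OF i0] assms] by blast
  then have "i1 \<in> I - {i0}" using is_pm_memD[OF is_pm_drop_left[OF i0]] by blast
  moreover obtain i2 where "(i2, j) \<in> S (I - {i1}) J"
    using is_pm_right_ex[OF is_pm_drop_left assms] calculation by blast
  moreover from this have "i2 \<noteq> i1" using is_pm_memD[OF is_pm_drop_left] calculation by blast
  ultimately show ?thesis using that i0 i1 unfolding left_link_def by blast
qed

text \<open>Here the two left-link neighbours of a vertex in J already exhaust its degree.\<close>
lemma link_edges_in_left_link_if_deg2:
  assumes deg: "right_deg2 {1..d} (pointed_ext d J (link_edges d S I J))"
    and ij: "(i, j) \<in> link_edges d S I J" "j \<in> J"
  shows "(i, j) \<in> left_link S I J"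
proof -
  let ?N = "{i. (i, j) \<in> link_edges d S I J}"
  have "{x. (x, j) \<in> pointed_ext d J (link_edges d S I J)} = Inl ` ?N"
    unfolding pointed_ext_def using ij(2) by auto
  moreover have "card {x. (x, j) \<in> pointed_ext d J (link_edges d S I J)} = 2"
    using deg ij(2) J_sub unfolding right_deg2_def by blast
  ultimately have card_N: "card ?N = 2" by (simp add: card_image)
  obtain i1 i2 where i12: "i1 \<noteq> i2" "(i1, j) \<in> left_link S I J" "(i2, j) \<in> left_link S I J"
    using left_link_two_at[OF ij(2)] by blast
  then have "{i1, i2} \<subseteq> ?N" unfolding link_edges_def by blast
  moreover have "finite ?N" using card_N by (metis card.infinite zero_neq_numeral)
  ultimately have "{i1, i2} = ?N" using card_N i12(1) by (simp add: card_subset_eq)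
  then have "i \<in> {i1, i2}" using ij(1) by blast
  then show ?thesis using i12 by blast
qed

lemma link_edges_in_left_link_if_closure:
  assumes clos: "stack_closure n d S"
    and ij: "(i, j) \<in> link_edges d S I J" "j \<in> J"
  shows "(i, j) \<in> left_link S I J"
proof (cases "(i, j) \<in> left_link S I J")
  case False
  then obtain k where k: "k \<in> {1..d} - J" "(i, j) \<in> S I (insert k J)"
    using ij(1) unfolding link_edges_def by blast
  let ?m = "mate S I J k"
  have P: "is_pm (I - {?m}) J (S I (insert k J) - {(?m, k)})"
    using is_pm_Diff_edge[OF is_pm_add_right[OF k(1)] mate_mem[OF k(1)]] k(1) by simp
  have "card I = card (insert k J)" using k(1) card_IJ finite_J by simp
  then have "S (I - {?m}) J \<subseteq> S I (insert k J)"
    using clos[unfolded stack_closure_def, rule_format, of I "insert k J" "I - {?m}" J] P I_sub J_sub k(1)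
    by auto
  moreover note Q = is_pm_drop_left[OF mate_in[OF k(1)]]
  ultimately have "S (I - {?m}) J \<subseteq> S I (insert k J) - {(?m, k)}"
    using is_pm_memD[OF Q] by blast
  then have "S (I - {?m}) J = S I (insert k J) - {(?m, k)}"
    using is_pm_subset_eq[OF Q P] by blast
  moreover have "(i, j) \<noteq> (?m, k)" using ij(2) k(1) by auto
  ultimately show ?thesis using k(2) mate_in[OF k(1)] unfolding left_link_def by blast
qed

end

text \<open>Linkage of the pointed matching field with reduction S, expressed in terms of S, see
  linkage_pmf_unreduce_iff.\<close>
definition stack_linkage :: "nat \<Rightarrow> nat \<Rightarrow> stack \<Rightarrow> bool" where
  "stack_linkage n d S \<longleftrightarrow> (\<forall>I J. I \<subseteq> {1..n} \<and> J \<subseteq> {1..d} \<and> card I = card J + 1 \<longrightarrow>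
     bip_spanning_tree (pointed_set d I J) {1..d} (pointed_ext d J (link_edges d S I J)) \<and>
     right_deg2 {1..d} (pointed_ext d J (link_edges d S I J)))"

lemma stack_linkageD:
  assumes "stack_linkage n d S" "I \<subseteq> {1..n}" "J \<subseteq> {1..d}" "card I = card J + 1"
  shows "bip_spanning_tree (pointed_set d I J) {1..d} (pointed_ext d J (link_edges d S I J))"
    and "right_deg2 {1..d} (pointed_ext d J (link_edges d S I J))"
  using assms unfolding stack_linkage_def by simp_all

lemma subsets_one_smaller_eq:
  assumes "finite A"
  shows "{B. B \<subseteq> A \<and> card B + 1 = card A} = (\<lambda>a. A - {a}) ` A"
proof (intro equalityI subsetI)
  fix B assume B: "B \<in> {B. B \<subseteq> A \<and> card B + 1 = card A}"
  then have "card (A - B) = 1"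
    using assms card_Diff_subset[of B A] finite_subset[of B A] by auto
  then obtain a where "A - B = {a}" by (meson card_1_singletonE)
  then show "B \<in> (\<lambda>a. A - {a}) ` A" using B by blast
next
  fix B assume "B \<in> (\<lambda>a. A - {a}) ` A"
  then obtain a where "a \<in> A" "B = A - {a}" by blast
  then show "B \<in> {B. B \<subseteq> A \<and> card B + 1 = card A}"
    using assms card_gt_0_iff[of A] by (auto simp: card_Diff_singleton)
qed

lemma left_link_eq_Union:
  assumes "finite I" "card I = card J + 1"
  shows "\<Union>{S I' J | I'. I' \<subseteq> I \<and> card I' = card J} = left_link S I J"
proof -
  have "{S I' J | I'. I' \<subseteq> I \<and> card I' = card J} =
      (\<lambda>I'. S I' J) ` {I'. I' \<subseteq> I \<and> card I' + 1 = card I}"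
    using assms(2) by auto
  also have "\<dots> = (\<lambda>i. S (I - {i}) J) ` I"
    unfolding subsets_one_smaller_eq[OF assms(1)] image_image ..
  finally show ?thesis unfolding left_link_def by simp
qed

lemma stack_linkage_remove_edge:
  assumes stack: "matching_stack n d S" and link: "stack_linkage n d S"
    and I_sub: "I \<subseteq> {1..n}" and J_sub: "J \<subseteq> {1..d}" and card_eq: "card I = card J"
    and ik: "(i, k) \<in> S I J"
  shows "S (I - {i}) (J - {k}) = S I J - {(i, k)}"
proof -
  let ?J = "J - {k}"
  have P: "is_pm I J (S I J)" using matching_stack_is_pm[OF stack I_sub J_sub card_eq] .
  have i: "i \<in> I" and k: "k \<in> J" using is_pm_memD[OF P ik] by auto
  have fin: "finite I" "finite J" using I_sub J_sub finite_subset by blast+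
  have J'_sub: "?J \<subseteq> {1..d}" using J_sub by auto
  have card': "card I = card ?J + 1" using card_eq k fin
    by (metis card_Suc_Diff1 Suc_eq_plus1)
  note ctx = stack I_sub J'_sub card'
  have inside: "\<And>a b. (a, b) \<in> link_edges d S I ?J \<Longrightarrow> b \<in> ?J \<Longrightarrow> (a, b) \<in> left_link S I ?J"
    using link_edges_in_left_link_if_deg2[OF ctx stack_linkageD(2)[OF link I_sub J'_sub card']] .
  have "bip_spanning_tree I ?J (left_link S I ?J)"
    using link_graph_tree_iff[OF ctx] inside stack_linkageD[OF link I_sub J'_sub card'] by blast
  then have acyclic: "bip_acyclic (left_link S I ?J)"
    unfolding bip_spanning_tree_def by (elim conjE)
  have "S I (insert k ?J) \<subseteq> (\<Union>k\<in>{1..d} - ?J. S I (insert k ?J))"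
    by (rule UN_upper) (use k J_sub in auto)
  then have S_link: "S I J \<subseteq> link_edges d S I ?J"
    unfolding link_edges_def using k by (simp add: insert_absorb le_supI2)
  have P': "is_pm (I - {i}) ?J (S I J - {(i, k)})" using is_pm_Diff_edge[OF P ik] .
  have P'_left: "S I J - {(i, k)} \<subseteq> left_link S I ?J"
  proof
    fix x assume x: "x \<in> S I J - {(i, k)}"
    moreover obtain a b where "x = (a, b)" by fastforce
    ultimately show "x \<in> left_link S I ?J"
      using inside S_link is_pm_memD[OF P'] by blast
  qed
  have Q: "is_pm (I - {i}) ?J (S (I - {i}) ?J)" using is_pm_drop_left[OF ctx i] .
  have Q_left: "S (I - {i}) ?J \<subseteq> left_link S I ?J"
    unfolding left_link_def by (rule UN_upper[OF i])
  show ?thesis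
    using is_pm_unique_in_acyclic[OF Q P' _ _ Un_least[OF Q_left P'_left] acyclic] fin by simp
qed

text \<open>Deleting one at a time the edges of M_{I,J} at the vertices of I - I' leads to M_{I',J'}.\<close>
lemma stack_closure_if_remove_edge:
  assumes stack: "matching_stack n d S"
    and remove: "\<And>I J i k. I \<subseteq> {1..n} \<Longrightarrow> J \<subseteq> {1..d} \<Longrightarrow> card I = card J \<Longrightarrow> (i, k) \<in> S I J \<Longrightarrow>
      S (I - {i}) (J - {k}) = S I J - {(i, k)}"
  shows "stack_closure n d S"
proof -
  have subset: "S I' J' \<subseteq> S I J"
    if "I \<subseteq> {1..n}" "J \<subseteq> {1..d}" "card I = card J" "I' \<subseteq> I" "J' \<subseteq> J" "N \<subseteq> S I J" "is_pm I' J' N"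
    for I J I' J' N
    using that
  proof (induction "card (I - I')" arbitrary: I J)
    case 0
    have fin: "finite I" "finite J" using 0(2,3) finite_subset by blast+
    then have "I' = I" using 0(1,5) by auto
    moreover have "card J' = card J" using is_pm_card_eq[OF 0(8)] 0 calculation by simp
    ultimately show ?case using card_subset_eq[OF fin(2) 0(6)] by simp
  next
    case (Suc m)
    have fin: "finite I" "finite J" using Suc(3,4) finite_subset by blast+
    obtain i where i: "i \<in> I" "i \<notin> I'" using Suc(2) by (metis Diff_eq_empty_iff card.empty nat.distinct(1) subsetI)
    have P: "is_pm I J (S I J)" using matching_stack_is_pm[OF stack Suc(3-5)] .
    obtain k where ik: "(i, k) \<in> S I J" using is_pm_left_ex[OF P i(1)] by blast
    have k: "k \<in> J" using is_pm_memD[OF P ik] by simp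
    have "k \<notin> J'"
    proof
      assume "k \<in> J'"
      then obtain a where "(a, k) \<in> N" using is_pm_right_ex[OF Suc(9)] by blast
      then show False using is_pm_memD[OF Suc(9)] is_pm_right_unique[OF P ik] Suc(8) i(2) by blast
    qed
    have step: "S (I - {i}) (J - {k}) = S I J - {(i, k)}" using remove[OF Suc(3-5) ik] .
    have "(i, k) \<notin> N" using is_pm_memD[OF Suc(9)] i(2) by blast
    then have "N \<subseteq> S (I - {i}) (J - {k})" unfolding step using Suc(8) by blast
    moreover have "m = card (I - {i} - I')"
    proof -
      have "I - {i} - I' = (I - I') - {i}" by blast
      then show ?thesis using Suc(2) i fin(1) by (simp add: card_Diff_singleton)
    qed
    moreover have "card (I - {i}) = card (J - {k})" using Suc(5) i k fin by simp
    moreover have "I - {i} \<subseteq> {1..n}" "J - {k} \<subseteq> {1..d}" "I' \<subseteq> I - {i}" "J' \<subseteq> J - {k}"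
      using Suc(3,4,6,7) i(2) \<open>k \<notin> J'\<close> by auto
    ultimately have "S I' J' \<subseteq> S (I - {i}) (J - {k})"
      using Suc.hyps(1) Suc(9) by blast
    then show ?case using step by blast
  qed
  show ?thesis unfolding stack_closure_def
    by (intro allI impI, elim conjE exE) (rule subset)
qed

lemma stack_linkage_iff:
  assumes stack: "matching_stack n d S"
  shows "stack_linkage n d S \<longleftrightarrow> stack_closure n d S \<and> stack_left_linkage n d S"
proof
  assume link: "stack_linkage n d S"
  have "stack_left_linkage n d S" unfolding stack_left_linkage_def Let_def
  proof (intro allI impI, elim conjE)
    fix I J assume IJ: "I \<subseteq> {1..n}" "J \<subseteq> {1..d}" "card I = card J + 1"
    have "finite I" using IJ(1) finite_subset by blast
    moreover have "bip_spanning_tree I J (left_link S I J) \<and> right_deg2 J (left_link S I J)"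
      using link_graph_tree_iff[OF stack IJ] link_edges_in_left_link_if_deg2[OF stack IJ]
        stack_linkageD[OF link IJ] by blast
    ultimately show "bip_spanning_tree I J (\<Union>{S I' J | I'. I' \<subseteq> I \<and> card I' = card J}) \<and>
        right_deg2 J (\<Union>{S I' J | I'. I' \<subseteq> I \<and> card I' = card J})"
      using left_link_eq_Union[OF _ IJ(3)] by simp
  qed
  then show "stack_closure n d S \<and> stack_left_linkage n d S"
    using stack_closure_if_remove_edge[OF stack stack_linkage_remove_edge[OF stack link]] by blast
next
  assume "stack_closure n d S \<and> stack_left_linkage n d S"
  then have clos: "stack_closure n d S" and left: "stack_left_linkage n d S" by blast+
  show "stack_linkage n d S" unfolding stack_linkage_def
  proof (intro allI impI, elim conjE)
    fix I J assume IJ: "I \<subseteq> {1..n}" "J \<subseteq> {1..d}" "card I = card J + 1"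
    have "finite I" using IJ(1) finite_subset by blast
    moreover have "bip_spanning_tree I J (\<Union>{S I' J | I'. I' \<subseteq> I \<and> card I' = card J}) \<and>
        right_deg2 J (\<Union>{S I' J | I'. I' \<subseteq> I \<and> card I' = card J})"
      using left IJ unfolding stack_left_linkage_def Let_def by blast
    ultimately have "bip_spanning_tree I J (left_link S I J) \<and> right_deg2 J (left_link S I J)"
      using left_link_eq_Union[OF _ IJ(3)] by simp
    then show "bip_spanning_tree (pointed_set d I J) {1..d} (pointed_ext d J (link_edges d S I J)) \<and>
        right_deg2 {1..d} (pointed_ext d J (link_edges d S I J))"
      using link_graph_tree_iff[OF stack IJ] link_edges_in_left_link_if_closure[OF stack IJ clos] by blast
  qed
qed

section \<open>Reduction and its inverse\<close>

definition unreduce :: "nat \<Rightarrow> nat \<Rightarrow> stack \<Rightarrow> (nat + nat) set \<Rightarrow> ((nat + nat) \<times> nat) set" where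
  "unreduce n d S \<sigma> = (if \<sigma> \<subseteq> ground n d \<and> card \<sigma> = d
     then pointed_ext d ({1..d} - Inr -` \<sigma>) (S (Inl -` \<sigma>) ({1..d} - Inr -` \<sigma>)) else {})"

lemma reduction_eq:
  "I \<subseteq> {1..n} \<Longrightarrow> J \<subseteq> {1..d} \<Longrightarrow> card I = card J \<Longrightarrow>
    reduction n d M I J = {(i, j). (Inl i, j) \<in> M (pointed_set d I J)}"
  unfolding reduction_def pointed_set_def Plus_def by simp

lemma unreduce_pointed_set:
  assumes "I \<subseteq> {1..n}" "J \<subseteq> {1..d}" "card I = card J"
  shows "unreduce n d S (pointed_set d I J) = pointed_ext d J (S I J)"
  unfolding unreduce_def pointed_set_vimage[OF assms(2)]
  using pointed_set_subset_ground[OF assms(1)] card_pointed_set_eq[OF assms] by simp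

lemma pointed_matching_fieldD:
  assumes "pointed_matching_field n d M" "\<sigma> \<subseteq> ground n d" "card \<sigma> = d"
  shows "is_pm \<sigma> {1..d} (M \<sigma>)" "\<And>j. Inr j \<in> \<sigma> \<Longrightarrow> (Inr j, j) \<in> M \<sigma>"
  using assms unfolding pointed_matching_field_def by (metis (full_types))+

lemma pointed_matching_field_outside:
  "pointed_matching_field n d M \<Longrightarrow> \<not> (\<sigma> \<subseteq> ground n d \<and> card \<sigma> = d) \<Longrightarrow> M \<sigma> = {}"
  unfolding pointed_matching_field_def by metis

lemma pointed_matching_field_eq_pointed_ext:
  assumes pmf: "pointed_matching_field n d M"
    and IJ: "I \<subseteq> {1..n}" "J \<subseteq> {1..d}" "card I = card J"
  shows "M (pointed_set d I J) = pointed_ext d J (reduction n d M I J)"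
proof -
  note D = pointed_matching_fieldD[OF pmf pointed_set_subset_ground[OF IJ(1)] card_pointed_set_eq[OF IJ]]
  show ?thesis
    unfolding reduction_eq[OF IJ] using is_pm_eq_pointed_ext[OF D(1) D(2)] by simp
qed

lemma matching_stack_reduction:
  assumes pmf: "pointed_matching_field n d M"
  shows "matching_stack n d (reduction n d M)"
  unfolding matching_stack_def
proof (intro allI)
  fix I J
  show "if I \<subseteq> {1..n} \<and> J \<subseteq> {1..d} \<and> card I = card J then is_pm I J (reduction n d M I J)
    else reduction n d M I J = {}"
  proof (cases "I \<subseteq> {1..n} \<and> J \<subseteq> {1..d} \<and> card I = card J")
    case True
    then have IJ: "I \<subseteq> {1..n}" "J \<subseteq> {1..d}" "card I = card J" by blast+
    have "is_pm (pointed_set d I J) {1..d} (M (pointed_set d I J))"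
      using pointed_matching_fieldD(1)[OF pmf pointed_set_subset_ground[OF IJ(1)] card_pointed_set_eq[OF IJ]] .
    then have "is_pm I J (reduction n d M I J)"
      unfolding pointed_matching_field_eq_pointed_ext[OF pmf IJ] is_pm_pointed_ext_iff[OF IJ(2)] .
    then show ?thesis using True by simp
  next
    case False
    then show ?thesis by (simp only: reduction_def if_not_P[OF False] if_False)
  qed
qed

lemma unreduce_reduction:
  assumes pmf: "pointed_matching_field n d M"
  shows "unreduce n d (reduction n d M) = M"
proof
  fix \<sigma>
  show "unreduce n d (reduction n d M) \<sigma> = M \<sigma>"
  proof (cases "\<sigma> \<subseteq> ground n d \<and> card \<sigma> = d")
    case True
    then obtain I J where IJ: "I \<subseteq> {1..n}" "J \<subseteq> {1..d}" "\<sigma> = pointed_set d I J" "card I = card J"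
      by (metis add.commute add_left_cancel subset_groundE)
    then show ?thesis
      using unreduce_pointed_set pointed_matching_field_eq_pointed_ext[OF pmf] by simp
  next
    case False
    then show ?thesis
      using pointed_matching_field_outside[OF pmf False] by (simp only: unreduce_def if_not_P[OF False] if_False)
  qed
qed

lemma pointed_matching_field_unreduce:
  assumes stack: "matching_stack n d S"
  shows "pointed_matching_field n d (unreduce n d S)"
  unfolding pointed_matching_field_def
proof (intro allI)
  fix \<sigma>
  show "if \<sigma> \<subseteq> ground n d \<and> card \<sigma> = d
    then is_pm \<sigma> {1..d} (unreduce n d S \<sigma>) \<and> (\<forall>j. Inr j \<in> \<sigma> \<longrightarrow> (Inr j, j) \<in> unreduce n d S \<sigma>)
    else unreduce n d S \<sigma> = {}"
  proof (cases "\<sigma> \<subseteq> ground n d \<and> card \<sigma> = d")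
    case True
    then obtain I J where IJ: "I \<subseteq> {1..n}" "J \<subseteq> {1..d}" "\<sigma> = pointed_set d I J" "card I = card J"
      by (metis add.commute add_left_cancel subset_groundE)
    then show ?thesis
      using True unreduce_pointed_set is_pm_pointed_ext_iff matching_stack_is_pm[OF stack] by simp
  next
    case False
    then show ?thesis by (simp only: unreduce_def if_not_P[OF False] if_False)
  qed
qed

lemma reduction_unreduce:
  assumes stack: "matching_stack n d S"
  shows "reduction n d (unreduce n d S) = S"
proof (intro ext)
  fix I J
  show "reduction n d (unreduce n d S) I J = S I J"
  proof (cases "I \<subseteq> {1..n} \<and> J \<subseteq> {1..d} \<and> card I = card J")
    case True
    then show ?thesis using reduction_eq unreduce_pointed_set by simp
  next
    case False
    then show ?thesis
      using matching_stack_outside[OF stack False] by (simp only: reduction_def if_not_P[OF False] if_False)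
  qed
qed

lemma Union_unreduce_eq_link_graph:
  assumes stack: "matching_stack n d S"
    and I_sub: "I \<subseteq> {1..n}" and J_sub: "J \<subseteq> {1..d}" and card_IJ: "card I = card J + 1"
  shows "\<Union>{unreduce n d S \<sigma> | \<sigma>. \<sigma> \<subseteq> pointed_set d I J \<and> card \<sigma> = d} =
    pointed_ext d J (link_edges d S I J)"
proof -
  let ?\<tau> = "pointed_set d I J" and ?K = "{1..d} - J"
  have finI: "finite I" using I_sub finite_subset by blast
  have finJ: "finite J" using J_sub finite_subset by blast
  have "card ?\<tau> = d + 1" using card_pointed_set[OF finI J_sub] card_IJ by simp
  then have "{\<sigma>. \<sigma> \<subseteq> ?\<tau> \<and> card \<sigma> = d} = (\<lambda>y. ?\<tau> - {y}) ` ?\<tau>"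
    using subsets_one_smaller_eq[of ?\<tau>] finI unfolding pointed_set_def by simp
  moreover have "?\<tau> = Inl ` I \<union> Inr ` ?K" unfolding pointed_set_def Plus_def ..
  moreover have "unreduce n d S (?\<tau> - {Inl i}) = pointed_ext d J (S (I - {i}) J)" if "i \<in> I" for i
  proof -
    have "?\<tau> - {Inl i} = pointed_set d (I - {i}) J" unfolding pointed_set_def by auto
    moreover have "I - {i} \<subseteq> {1..n}" using I_sub by blast
    ultimately show ?thesis using unreduce_pointed_set[of "I - {i}" n J d S] J_sub card_IJ finI that by simp
  qed
  moreover have "unreduce n d S (?\<tau> - {Inr k}) = pointed_ext d (insert k J) (S I (insert k J))"
    if "k \<in> ?K" for k
  proof -
    have "?\<tau> - {Inr k} = pointed_set d I (insert k J)" unfolding pointed_set_def using that by auto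
    then show ?thesis using unreduce_pointed_set[of I n "insert k J" d S] I_sub J_sub card_IJ finJ that by simp
  qed
  ultimately have "{unreduce n d S \<sigma> | \<sigma>. \<sigma> \<subseteq> ?\<tau> \<and> card \<sigma> = d} =
      (\<lambda>i. pointed_ext d J (S (I - {i}) J)) ` I \<union> (\<lambda>k. pointed_ext d (insert k J) (S I (insert k J))) ` ?K"
    by (simp add: setcompr_eq_image image_Un image_image)
  then have "\<Union>{unreduce n d S \<sigma> | \<sigma>. \<sigma> \<subseteq> ?\<tau> \<and> card \<sigma> = d} =
      (\<Union>i\<in>I. pointed_ext d J (S (I - {i}) J)) \<union> (\<Union>k\<in>?K. pointed_ext d (insert k J) (S I (insert k J)))"
    by simp
  also have "\<dots> = pointed_ext d J (link_edges d S I J)"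
    using card_IJ unfolding pointed_ext_def link_edges_def left_link_def by fastforce
  finally show ?thesis .
qed

lemma linkage_pmf_unreduce_iff:
  assumes stack: "matching_stack n d S"
  shows "linkage_pmf n d (unreduce n d S) \<longleftrightarrow> stack_linkage n d S"
proof -
  define tree_at :: "((nat + nat) \<times> nat) set \<Rightarrow> (nat + nat) set \<Rightarrow> bool"
    where "tree_at G \<tau> \<longleftrightarrow> bip_spanning_tree \<tau> {1..d} G \<and> right_deg2 {1..d} G" for G \<tau>
  have linkage_at: "tree_at (\<Union>{unreduce n d S \<sigma> | \<sigma>. \<sigma> \<subseteq> pointed_set d I J \<and> card \<sigma> = d}) (pointed_set d I J)
      \<longleftrightarrow> tree_at (pointed_ext d J (link_edges d S I J)) (pointed_set d I J)"
    if "I \<subseteq> {1..n}" "J \<subseteq> {1..d}" "card I = card J + 1" for I J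
    unfolding Union_unreduce_eq_link_graph[OF stack that] ..
  have pointed_set_in: "pointed_set d I J \<subseteq> ground n d \<and> card (pointed_set d I J) = d + 1"
    if "I \<subseteq> {1..n}" "J \<subseteq> {1..d}" "card I = card J + 1" for I J
    using pointed_set_subset_ground[OF that(1)] card_pointed_set[OF finite_subset[OF that(1)] that(2)] that(3)
    by simp
  have pointed_set_ex: "\<exists>I J. I \<subseteq> {1..n} \<and> J \<subseteq> {1..d} \<and> card I = card J + 1 \<and> \<tau> = pointed_set d I J"
    if \<tau>: "\<tau> \<subseteq> ground n d" "card \<tau> = d + 1" for \<tau>
  proof -
    obtain I J where "I \<subseteq> {1..n}" "J \<subseteq> {1..d}" "\<tau> = pointed_set d I J" "card \<tau> + card J = card I + d"
      using subset_groundE[OF \<tau>(1)] by blast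
    moreover from this have "card I = card J + 1" using \<tau>(2) by simp
    ultimately show ?thesis by blast
  qed
  have "linkage_pmf n d (unreduce n d S) \<longleftrightarrow>
      (\<forall>\<tau>. \<tau> \<subseteq> ground n d \<and> card \<tau> = d + 1 \<longrightarrow>
        tree_at (\<Union>{unreduce n d S \<sigma> | \<sigma>. \<sigma> \<subseteq> \<tau> \<and> card \<sigma> = d}) \<tau>)"
    unfolding linkage_pmf_def tree_at_def Let_def ..
  also have "\<dots> \<longleftrightarrow> (\<forall>I J. I \<subseteq> {1..n} \<and> J \<subseteq> {1..d} \<and> card I = card J + 1 \<longrightarrow>
        tree_at (pointed_ext d J (link_edges d S I J)) (pointed_set d I J))"
  proof (intro iffI allI impI)
    fix I J assume H: "\<forall>\<tau>. \<tau> \<subseteq> ground n d \<and> card \<tau> = d + 1 \<longrightarrow>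
        tree_at (\<Union>{unreduce n d S \<sigma> | \<sigma>. \<sigma> \<subseteq> \<tau> \<and> card \<sigma> = d}) \<tau>"
      and IJ_conj: "I \<subseteq> {1..n} \<and> J \<subseteq> {1..d} \<and> card I = card J + 1"
    from IJ_conj have IJ: "I \<subseteq> {1..n}" "J \<subseteq> {1..d}" "card I = card J + 1" by blast+
    show "tree_at (pointed_ext d J (link_edges d S I J)) (pointed_set d I J)"
      using H[rule_format, OF pointed_set_in[OF IJ]] linkage_at[OF IJ] by blast
  next
    fix \<tau> assume H: "\<forall>I J. I \<subseteq> {1..n} \<and> J \<subseteq> {1..d} \<and> card I = card J + 1 \<longrightarrow>
        tree_at (pointed_ext d J (link_edges d S I J)) (pointed_set d I J)"
      and \<tau>_in: "\<tau> \<subseteq> ground n d \<and> card \<tau> = d + 1"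
    obtain I J where IJ: "I \<subseteq> {1..n}" "J \<subseteq> {1..d}" "card I = card J + 1"
      and \<tau>: "\<tau> = pointed_set d I J"
      using pointed_set_ex \<tau>_in by meson
    show "tree_at (\<Union>{unreduce n d S \<sigma> | \<sigma>. \<sigma> \<subseteq> \<tau> \<and> card \<sigma> = d}) \<tau>"
      unfolding \<tau> linkage_at[OF IJ] using H IJ by simp
  qed
  also have "\<dots> \<longleftrightarrow> stack_linkage n d S"
    unfolding stack_linkage_def tree_at_def ..
  finally show ?thesis .
qed

lemma linkage_pmf_iff_left_semi_ensemble:
  assumes pmf: "pointed_matching_field n d M"
  shows "linkage_pmf n d M \<longleftrightarrow> matching_left_semi_ensemble n d (reduction n d M)"
proof -
  note stack = matching_stack_reduction[OF pmf]
  have "linkage_pmf n d M \<longleftrightarrow> linkage_pmf n d (unreduce n d (reduction n d M))"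
    unfolding unreduce_reduction[OF pmf] ..
  also have "\<dots> \<longleftrightarrow> stack_closure n d (reduction n d M) \<and> stack_left_linkage n d (reduction n d M)"
    using linkage_pmf_unreduce_iff[OF stack] stack_linkage_iff[OF stack] by simp
  finally show ?thesis unfolding matching_left_semi_ensemble_def using stack by simp
qed

theorem mainTheorem4:
  fixes n d :: nat
  assumes "0 < n" and "0 < d"
  shows "(\<forall>M. pointed_matching_field n d M \<longrightarrow>
            (linkage_pmf n d M \<longleftrightarrow> matching_left_semi_ensemble n d (reduction n d M)))
       \<and> bij_betw (reduction n d)
           {M. pointed_matching_field n d M \<and> linkage_pmf n d M}
           {S. matching_left_semi_ensemble n d S}"
proof -
  have "bij_betw (reduction n d)
      {M. pointed_matching_field n d M \<and> linkage_pmf n d M} {S. matching_left_semi_ensemble n d S}"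
  proof (rule bij_betw_byWitness[where f' = "unreduce n d"])
    show "\<forall>M \<in> {M. pointed_matching_field n d M \<and> linkage_pmf n d M}. unreduce n d (reduction n d M) = M"
      using unreduce_reduction by blast
    show "\<forall>S \<in> {S. matching_left_semi_ensemble n d S}. reduction n d (unreduce n d S) = S"
      using reduction_unreduce unfolding matching_left_semi_ensemble_def by blast
    show "reduction n d ` {M. pointed_matching_field n d M \<and> linkage_pmf n d M}
        \<subseteq> {S. matching_left_semi_ensemble n d S}"
      using linkage_pmf_iff_left_semi_ensemble by blast
    show "unreduce n d ` {S. matching_left_semi_ensemble n d S}
        \<subseteq> {M. pointed_matching_field n d M \<and> linkage_pmf n d M}"
      using linkage_pmf_iff_left_semi_ensemble pointed_matching_field_unreduce reduction_unreduce
      unfolding matching_left_semi_ensemble_def by fastforce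
  qed
  then show ?thesis using linkage_pmf_iff_left_semi_ensemble by blast
qed

end
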